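(* Let $\epsilon\in(0,1)$ and $T\in\mathbb{N}$, and let $k\in\mathbb{N}$. Let $w\in\{0,1\}^T$ be a random variable satisfying the $\epsilon$-martingale condition. Then \[ \Pr[w \text{ violates } k\text{-CP}] \le \Pr[w\text{ violates } k\text{-slot-CP}] \le T\cdot\exp\bigl(-\Omega(\epsilon^3(1-O(\epsilon))k)\bigr). \]
   Context: Characteristic strings and forks. A characteristic string is $w=w_1\dots w_n\in\{0,1\}^n$; index $i$ is honest if $w_i=0$ and adversarial if $w_i=1$. A fork for $w$ is a rooted tree $F=(V,E)$ with edges directed away from the root $r$, together with a labeling $\ell:V\to\{0,\dots,n\}$, such that (F1) $\ell(r)=0$; (F2) labels strictly increase along every directed path; (F3) every honest index is the label of exactly one vertex; (F4) if $i<j$ are honest indices then the vertex labeled $i$ has strictly smaller depth than the vertex labeled $j$. Write $F\vdash w$. A vertex is honest if it is the root or its label is an honest index. A tine is a directed path starting at the root (not necessarily ending at a leaf); its length is its number of edges, $\ell(t)$ is the label of its last vertex, and the depth of a vertex is the length of the tine ending at it. A tine $t$ is viable if its length is at least the depth of every honest vertex $v$ with $\ell(v)\le\ell(t)$. For a tine $t$, the trimmed tine $t^{\lceil k}$ is the portion of $t$ consisting of vertices labeled in $\{0,\dots,\ell(t)-k\}$; for tines $t_1,t_2$, $t_1\preceq t_2$ means $t_1$ is a prefix of $t_2$. $k$-slot-CP: a fork $F\vdash w$ satisfies $k$-slot-CP if for all pairs $(t_1,t_2)$ of viable tines of $F$ with $\ell(t_1)\le\ell(t_2)$, $t_1^{\lceil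 k}\preceq t_2$; $w$ satisfies $k$-slot-CP if every fork for $w$ does, and otherwise $w$ violates $k$-slot-CP. $k$-CP is the analogous (traditional) property where instead of removing the vertices of the last $k$ slots, the last $k$ blocks (vertices) of $t_1$ are removed; a $k$-CP violation implies a $k$-slot-CP violation. A random variable $W=(W_1,\dots,W_n)\in\{0,1\}^n$ satisfies the $\epsilon$-martingale condition if for every $t$, $\Pr[W_t=1\mid W_1,\dots,W_{t-1}]\le(1-\epsilon)/2$ (for arbitrary conditioning values). *)

theory Defs
  imports "HOL-Probability.Probability" "HOL-Library.Sublist"
begin

text \<open>Characteristic strings are bool lists; True = 1 = adversarial, False = 0 = honest.
  Indices are 1-based: w_i = w ! (i - 1).\<close>

definition honest_idx :: "bool list \<Rightarrow> nat \<Rightarrow> bool" where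
  "honest_idx w i \<longleftrightarrow> 1 \<le> i \<and> i \<le> length w \<and> \<not> w ! (i - 1)"

text \<open>A fork: finite vertex set (of naturals), a root, a parent map (the edges are
  parent v \<rightarrow> v for every non-root vertex v), and a labeling.\<close>

record fork =
  verts :: "nat set"
  root :: nat
  parent :: "nat \<Rightarrow> nat"
  lbl :: "nat \<Rightarrow> nat"

definition is_tine :: "fork \<Rightarrow> nat list \<Rightarrow> bool" where
  "is_tine F t \<longleftrightarrow> t \<noteq> [] \<and> hd t = root F \<and> set t \<subseteq> verts F \<and>
     (\<forall>i. Suc i < length t \<longrightarrow> t ! Suc i \<noteq> root F \<and> parent F (t ! Suc i) = t ! i)"

definition tine_len :: "nat list \<Rightarrow> nat" where
  "tine_len t = length t - 1"

definition tine_lbl :: "fork \<Rightarrow> nat list \<Rightarrow> nat" where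
  "tine_lbl F t = lbl F (last t)"

definition depth :: "fork \<Rightarrow> nat \<Rightarrow> nat" where
  "depth F v = (THE d. \<exists>t. is_tine F t \<and> last t = v \<and> d = tine_len t)"

definition is_fork :: "bool list \<Rightarrow> fork \<Rightarrow> bool" where
  "is_fork w F \<longleftrightarrow>
     finite (verts F) \<and> root F \<in> verts F \<and>
     (\<forall>v \<in> verts F - {root F}. parent F v \<in> verts F) \<and>
     (\<forall>v \<in> verts F. \<exists>m. (parent F ^^ m) v = root F) \<and>
     (\<forall>v \<in> verts F. lbl F v \<le> length w) \<and>
     lbl F (root F) = 0 \<and>
     (\<forall>v \<in> verts F - {root F}. lbl F (parent F v) < lbl F v) \<and>
     (\<forall>i. honest_idx w i \<longrightarrow> (\<exists>!v. v \<in> verts F \<and> lbl F v = i)) \<and>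
     (\<forall>u \<in> verts F. \<forall>v \<in> verts F. honest_idx w (lbl F u) \<and> honest_idx w (lbl F v)
        \<and> lbl F u < lbl F v \<longrightarrow> depth F u < depth F v)"

definition honest_vertex :: "bool list \<Rightarrow> fork \<Rightarrow> nat \<Rightarrow> bool" where
  "honest_vertex w F v \<longleftrightarrow> v = root F \<or> honest_idx w (lbl F v)"

definition viable :: "bool list \<Rightarrow> fork \<Rightarrow> nat list \<Rightarrow> bool" where
  "viable w F t \<longleftrightarrow> is_tine F t \<and>
     (\<forall>v \<in> verts F. honest_vertex w F v \<and> lbl F v \<le> tine_lbl F t \<longrightarrow> depth F v \<le> tine_len t)"

definition trim_slots :: "fork \<Rightarrow> nat \<Rightarrow> nat list \<Rightarrow> nat list" where
  "trim_slots F k t = filter (\<lambda>v. int (lbl F v) \<le> int (tine_lbl F t) - int k) t"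

definition trim_blocks :: "nat \<Rightarrow> nat list \<Rightarrow> nat list" where
  "trim_blocks k t = take (length t - k) t"

definition violates_slot_CP :: "nat \<Rightarrow> bool list \<Rightarrow> bool" where
  "violates_slot_CP k w \<longleftrightarrow> (\<exists>F. is_fork w F \<and> (\<exists>t1 t2. viable w F t1 \<and> viable w F t2 \<and>
      tine_lbl F t1 \<le> tine_lbl F t2 \<and> \<not> prefix (trim_slots F k t1) t2))"

definition violates_CP :: "nat \<Rightarrow> bool list \<Rightarrow> bool" where
  "violates_CP k w \<longleftrightarrow> (\<exists>F. is_fork w F \<and> (\<exists>t1 t2. viable w F t1 \<and> viable w F t2 \<and>
      tine_lbl F t1 \<le> tine_lbl F t2 \<and> \<not> prefix (trim_blocks k t1) t2))"

text \<open>epsilon-martingale condition for a distribution p on {0,1}^T (bool lists of length T):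
  Pr[W_{t+1} = 1 | W_1..W_t = xs] \<le> (1 - eps)/2 for all t < T and all xs, in
  multiplied-out form (so zero-probability conditions are harmless).\<close>
definition eps_martingale :: "real \<Rightarrow> nat \<Rightarrow> bool list pmf \<Rightarrow> bool" where
  "eps_martingale \<epsilon> T p \<longleftrightarrow> (\<forall>t < T. \<forall>xs. length xs = t \<longrightarrow>
      measure_pmf.prob p {w. take t w = xs \<and> w ! t}
        \<le> (1 - \<epsilon>) / 2 * measure_pmf.prob p {w. take t w = xs})"

end

theory Submission
  imports Defs
begin

text \<open>
  The honest vertex of a Catalan slot lies on every viable tine reaching that slot, so any two
  viable tines agree up to it. Hence a k-slot-CP violation leaves k consecutive slots without a
  Catalan slot; and since slots strictly increase along a tine, every k-CP violation is also a
  k-slot-CP violation.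

  For a fixed window of k slots, an online tracker follows the walk (up on adversarial, down on
  honest slots), its running minimum, and the earliest Catalan candidate of the window that is
  still alive. Under the \<open>\<epsilon>\<close>-martingale condition the potential Phi has expectation at most
  \<open>1 + 1/\<epsilon>\<close> before the window and shrinks by the factor \<open>1 - \<epsilon>^3/4\<close> in every step inside it;
  after the window the gambler's-ruin potential \<open>Psi \<le> Phi\<close> is a supermartingale which equals 1
  when no candidate survives. So the window is free of Catalan slots with probability at most
  \<open>(1 - \<epsilon>^3/4)^k (1 + 1/\<epsilon>)\<close>, and a union bound over the at most T windows gives
  \<open>T exp(-\<epsilon>^3 k / 8)\<close>.
\<close>

section \<open>Forks and tines\<close>

lemma is_tine_singleton_iff: "is_tine F [v] \<longleftrightarrow> v = root F \<and> root F \<in> verts F"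
  by (auto simp: is_tine_def)

lemma is_tine_take:
  assumes "is_tine F t" "0 < j"
  shows "is_tine F (take j t)"
  using assms unfolding is_tine_def by (auto simp: hd_take dest: in_set_takeD)

lemma is_tine_nth:
  assumes "is_tine F t"
  shows "t ! 0 = root F" and "i < length t \<Longrightarrow> t ! i \<in> verts F"
    and "Suc i < length t \<Longrightarrow> t ! Suc i \<noteq> root F"
    and "Suc i < length t \<Longrightarrow> parent F (t ! Suc i) = t ! i"
  using assms unfolding is_tine_def by (auto simp: hd_conv_nth)

lemma is_tine_snoc_iff:
  assumes "t \<noteq> []"
  shows "is_tine F (t @ [v]) \<longleftrightarrow>
    is_tine F t \<and> v \<in> verts F \<and> v \<noteq> root F \<and> parent F v = last t"
proof
  assume tv: "is_tine F (t @ [v])"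
  have "is_tine F t"
    using is_tine_take[OF tv, of "length t"] assms by simp
  moreover have "v \<in> verts F"
    using tv by (simp add: is_tine_def)
  moreover have "v \<noteq> root F \<and> parent F v = last t"
    using is_tine_nth(3,4)[OF tv, of "length t - 1"] assms by (simp add: nth_append last_conv_nth)
  ultimately show "is_tine F t \<and> v \<in> verts F \<and> v \<noteq> root F \<and> parent F v = last t"
    by blast
next
  assume *: "is_tine F t \<and> v \<in> verts F \<and> v \<noteq> root F \<and> parent F v = last t"
  have "(t @ [v]) ! Suc i \<noteq> root F \<and> parent F ((t @ [v]) ! Suc i) = (t @ [v]) ! i"
    if i: "Suc i < length (t @ [v])" for i
  proof -
    consider "Suc i < length t" | "i = length t - 1"
      using i assms by fastforce
    then show ?thesis
      by cases (use * assms in \<open>auto simp: is_tine_def nth_append last_conv_nth\<close>)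
  qed
  then show "is_tine F (t @ [v])"
    using * assms by (auto simp: is_tine_def)
qed

lemma is_tine_last_root_iff:
  assumes "is_tine F t"
  shows "last t = root F \<longleftrightarrow> t = [root F]"
proof
  assume last: "last t = root F"
  have "length t = 1"
  proof (rule ccontr)
    assume "length t \<noteq> 1"
    then have "Suc (length t - 2) < length t" "Suc (length t - 2) = length t - 1"
      using assms by (auto simp: is_tine_def Suc_diff_Suc numeral_2_eq_2 not_less_eq
          simp flip: length_greater_0_conv)
    then have "last t \<noteq> root F"
      using is_tine_nth(3)[OF assms] assms by (metis is_tine_def last_conv_nth)
    then show False using last by contradiction
  qed
  then show "t = [root F]"
    using assms by (cases t) (auto simp: is_tine_def)
qed simp

lemma tine_unique:
  assumes "is_tine F t" "is_tine F t'" "last t = last t'"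
  shows "t = t'"
  using assms
proof (induction t arbitrary: t' rule: rev_induct)
  case Nil
  then show ?case by (simp add: is_tine_def)
next
  case (snoc v t)
  show ?case
  proof (cases "t = []")
    case True
    then have "v = root F"
      using snoc.prems(1) by (simp add: is_tine_singleton_iff)
    then show ?thesis
      using True snoc.prems(3) is_tine_last_root_iff[OF snoc.prems(2)] by simp
  next
    case False
    then have t: "is_tine F t" and v: "v \<noteq> root F" "parent F v = last t"
      using snoc.prems(1) by (simp_all add: is_tine_snoc_iff)
    obtain u s where t': "t' = s @ [u]"
      using snoc.prems(2) by (cases t' rule: rev_cases) (auto simp: is_tine_def)
    have "u = v" using snoc.prems(3) t' by simp
    moreover have "s \<noteq> []"
      using snoc.prems(2) t' \<open>u = v\<close> v(1) by (auto simp: is_tine_singleton_iff)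
    ultimately have "is_tine F s" "last s = last t"
      using snoc.prems(2) v(2) unfolding t' by (simp_all add: is_tine_snoc_iff)
    then show ?thesis using snoc.IH[OF t] t' \<open>u = v\<close> by simp
  qed
qed

lemma depth_last:
  assumes "is_tine F t"
  shows "depth F (last t) = tine_len t"
  unfolding depth_def
proof (rule the_equality)
  show "\<exists>t'. is_tine F t' \<and> last t' = last t \<and> tine_len t = tine_len t'"
    using assms by blast
next
  fix d assume "\<exists>t'. is_tine F t' \<and> last t' = last t \<and> d = tine_len t'"
  then show "d = tine_len t"
    using assms tine_unique by metis
qed

lemma depth_nth:
  assumes "is_tine F t" "i < length t"
  shows "depth F (t ! i) = i"
  using depth_last[OF is_tine_take[OF assms(1), of "Suc i"]] assms(2)
  by (simp add: tine_len_def take_Suc_conv_app_nth)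

lemma fork_obtain_tine:
  assumes "is_fork w F" "v \<in> verts F"
  obtains t where "is_tine F t" "last t = v"
proof -
  obtain m where "(parent F ^^ m) v = root F"
    using assms by (auto simp: is_fork_def)
  then have "\<exists>t. is_tine F t \<and> last t = v"
    using assms(2)
  proof (induction m arbitrary: v)
    case 0
    then show ?case by (intro exI[of _ "[v]"]) (simp add: is_tine_singleton_iff)
  next
    case (Suc m)
    show ?case
    proof (cases "v = root F")
      case True
      then show ?thesis using Suc.prems by (intro exI[of _ "[v]"]) (simp add: is_tine_singleton_iff)
    next
      case False
      then have "parent F v \<in> verts F" "(parent F ^^ m) (parent F v) = root F"
        using assms(1) Suc.prems by (auto simp: is_fork_def funpow_Suc_right simp del: funpow.simps)
      then obtain t where t: "is_tine F t" "last t = parent F v"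
        using Suc.IH by blast
      then have "t \<noteq> []" by (simp add: is_tine_def)
      then show ?thesis
        using t False Suc.prems(2) by (intro exI[of _ "t @ [v]"]) (simp add: is_tine_snoc_iff)
    qed
  qed
  then show thesis using that by blast
qed

lemma depth_pos:
  assumes "is_fork w F" "v \<in> verts F" "v \<noteq> root F"
  shows "0 < depth F v"
proof -
  obtain t where t: "is_tine F t" "last t = v"
    using fork_obtain_tine assms(1,2) by blast
  then have "t \<noteq> [root F]" using assms(3) by auto
  then have "2 \<le> length t"
    using t(1) by (cases t rule: remdups_adj.cases) (auto simp: is_tine_def)
  then show ?thesis
    using depth_last[OF t(1)] t(2) by (simp add: tine_len_def)
qed

lemma fork_finite_verts: "is_fork w F \<Longrightarrow> finite (verts F)"
  by (simp add: is_fork_def)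

lemma fork_lbl_root: "is_fork w F \<Longrightarrow> lbl F (root F) = 0"
  by (simp add: is_fork_def)

lemma fork_lbl_le_length: "is_fork w F \<Longrightarrow> v \<in> verts F \<Longrightarrow> lbl F v \<le> length w"
  by (simp add: is_fork_def)

lemma tine_lbl_le_length:
  assumes "is_fork w F" "is_tine F t"
  shows "tine_lbl F t \<le> length w"
  using assms by (simp add: tine_lbl_def is_fork_def is_tine_def subset_iff)

lemma fork_lbl_parent_less:
  "is_fork w F \<Longrightarrow> v \<in> verts F \<Longrightarrow> v \<noteq> root F \<Longrightarrow> lbl F (parent F v) < lbl F v"
  by (simp add: is_fork_def)

lemma fork_honest_lbl_unique:
  assumes "is_fork w F" "honest_idx w i"
    and "u \<in> verts F" "lbl F u = i" "v \<in> verts F" "lbl F v = i"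
  shows "u = v"
  using assms unfolding is_fork_def by metis

lemma fork_honest_lbl_exists:
  assumes "is_fork w F" "honest_idx w i"
  obtains v where "v \<in> verts F" "lbl F v = i"
  using assms unfolding is_fork_def by metis

lemma fork_depth_less:
  assumes "is_fork w F" "u \<in> verts F" "v \<in> verts F"
    and "honest_idx w (lbl F u)" "honest_idx w (lbl F v)" "lbl F u < lbl F v"
  shows "depth F u < depth F v"
  using assms unfolding is_fork_def by blast

lemma tine_lbl_sorted:
  assumes "is_fork w F" "is_tine F t"
  shows "sorted_wrt (<) (map (lbl F) t)"
proof -
  have "lbl F (t ! i) < lbl F (t ! Suc i)" if i: "Suc i < length t" for i
    using fork_lbl_parent_less[OF assms(1) is_tine_nth(2,3)[OF assms(2) i]]
      is_tine_nth(4)[OF assms(2) i] by simp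
  then show ?thesis
    by (simp add: sorted_wrt_iff_nth_Suc_transp)
qed

lemma tine_lbl_less:
  assumes "is_fork w F" "is_tine F t" "i < j" "j < length t"
  shows "lbl F (t ! i) < lbl F (t ! j)"
  using sorted_wrt_nth_less[OF tine_lbl_sorted[OF assms(1,2)]] assms(3,4) by simp

lemma tine_lbl_le:
  assumes "is_fork w F" "is_tine F t" "i \<le> j" "j < length t"
  shows "lbl F (t ! i) \<le> lbl F (t ! j)"
  using tine_lbl_less[OF assms(1,2)] assms(3,4) by (cases "i = j") (auto intro: less_imp_le)

section \<open>Catalan slots lie on all viable tines\<close>

definition walk :: "bool list \<Rightarrow> int" where
  "walk xs = (\<Sum>x\<leftarrow>xs. if x then 1 else -1)"

lemma walk_Nil [simp]: "walk [] = 0"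
  by (simp add: walk_def)

lemma walk_snoc [simp]: "walk (xs @ [x]) = walk xs + (if x then 1 else -1)"
  by (simp add: walk_def)

lemma walk_take_diff:
  assumes "a \<le> e" "e \<le> length w"
  shows "walk (take e w) - walk (take a w) =
    int (card {j\<in>{a<..e}. \<not> honest_idx w j}) - int (card {j\<in>{a<..e}. honest_idx w j})"
proof -
  have "walk (take e w) - walk (take a w) = (\<Sum>j\<in>{a<..e}. if honest_idx w j then -1 else 1)"
    using assms
  proof (induction e)
    case (Suc e)
    show ?case
    proof (cases "a = Suc e")
      case False
      then have "{a<..Suc e} = insert (Suc e) {a<..e}" "walk (take (Suc e) w) =
          walk (take e w) + (if honest_idx w (Suc e) then -1 else 1)"
        using Suc.prems by (auto simp: take_Suc_conv_app_nth honest_idx_def)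
      then show ?thesis using Suc False by simp
    qed simp
  qed simp
  also have "\<dots> = int (card {j\<in>{a<..e}. \<not> honest_idx w j}) - int (card {j\<in>{a<..e}. honest_idx w j})"
    by (simp add: sum.If_cases Int_def)
  finally show ?thesis .
qed

text \<open>The walk goes up on adversarial and down on honest slots, so c is a Catalan slot iff every
  interval (j, c] contains more honest than adversarial slots and no interval (c, r] contains
  more adversarial than honest ones.\<close>

definition catalan_slot :: "bool list \<Rightarrow> nat \<Rightarrow> bool" where
  "catalan_slot w c \<longleftrightarrow> 1 \<le> c \<and> c \<le> length w \<and>
     (\<forall>j<c. walk (take c w) < walk (take j w)) \<and>
     (\<forall>r. c \<le> r \<and> r \<le> length w \<longrightarrow> walk (take r w) \<le> walk (take c w))"

lemma catalan_slot_honest: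
  assumes "catalan_slot w c"
  shows "honest_idx w c"
proof -
  have c: "1 \<le> c" "c \<le> length w" "walk (take c w) < walk (take (c - 1) w)"
    using assms unfolding catalan_slot_def by auto
  then have "take c w = take (c - 1) w @ [w ! (c - 1)]"
    by (metis Suc_diff_1 Suc_le_lessD diff_less less_le_trans take_Suc_conv_app_nth zero_less_one)
  then show ?thesis
    using c unfolding honest_idx_def by (auto split: if_splits)
qed

lemma honest_vertex_depth_less:
  assumes F: "is_fork w F" and "u \<in> verts F" "honest_vertex w F u"
    and "v \<in> verts F" "honest_idx w (lbl F v)" "lbl F u < lbl F v"
  shows "depth F u < depth F v"
proof (cases "u = root F")
  case True
  obtain t where t: "is_tine F t" "last t = u"
    using fork_obtain_tine[OF F \<open>u \<in> verts F\<close>] by blast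
  then have "depth F u = 0"
    using True depth_last[OF t(1)] is_tine_last_root_iff[OF t(1)] by (simp add: tine_len_def)
  moreover have "v \<noteq> root F"
    using assms(5) fork_lbl_root[OF F] by (auto simp: honest_idx_def)
  ultimately show ?thesis
    using depth_pos[OF F \<open>v \<in> verts F\<close>] by simp
next
  case False
  then show ?thesis
    using assms fork_depth_less[OF F] by (simp add: honest_vertex_def)
qed

definition adversarial_stretch :: "bool list \<Rightarrow> fork \<Rightarrow> nat list \<Rightarrow> nat \<Rightarrow> nat \<Rightarrow> nat \<Rightarrow> bool" where
  "adversarial_stretch w F t i0 i1 e \<longleftrightarrow> i0 < i1 \<and> i1 \<le> length t \<and> e \<le> length w \<and>
     (\<forall>i. i0 < i \<and> i < i1 \<longrightarrow> \<not> honest_idx w (lbl F (t ! i)) \<and> lbl F (t ! i) \<le> e) \<and>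
     (\<forall>v\<in>verts F. honest_idx w (lbl F v) \<and> lbl F v \<le> e \<longrightarrow> depth F v < i1)"

lemma adversarial_stretch_card_le:
  assumes F: "is_fork w F" and t: "is_tine F t" and st: "adversarial_stretch w F t i0 i1 e"
  shows "card {i0<..<i1} \<le> card {j\<in>{lbl F (t ! i0)<..e}. \<not> honest_idx w j}"
proof (rule card_inj_on_le)
  have "i1 \<le> length t"
    using st by (simp add: adversarial_stretch_def)
  then show "inj_on (\<lambda>i. lbl F (t ! i)) {i0<..<i1}"
    using tine_lbl_less[OF F t]
    by (intro inj_onI) (metis greaterThanLessThan_iff less_le_trans linorder_neqE_nat
        order.strict_implies_not_eq)
  show "(\<lambda>i. lbl F (t ! i)) ` {i0<..<i1} \<subseteq> {j\<in>{lbl F (t ! i0)<..e}. \<not> honest_idx w j}"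
    using tine_lbl_less[OF F t] st \<open>i1 \<le> length t\<close> by (fastforce simp: adversarial_stretch_def)
qed simp

lemma honest_slots_card_le:
  assumes F: "is_fork w F" and t: "is_tine F t" and st: "adversarial_stretch w F t i0 i1 e"
    and start: "honest_vertex w F (t ! i0)"
  shows "card {j\<in>{lbl F (t ! i0)<..e}. honest_idx w j} \<le> card {i0<..<i1}"
proof -
  define Hon where "Hon = {j\<in>{lbl F (t ! i0)<..e}. honest_idx w j}"
  define H where "H = {v\<in>verts F. lbl F v \<in> Hon}"
  have "i0 < length t" "t ! i0 \<in> verts F"
    using st is_tine_nth(2)[OF t] by (auto simp: adversarial_stretch_def)
  have "Hon \<subseteq> lbl F ` H"
    using fork_honest_lbl_exists[OF F] unfolding H_def Hon_def by blast
  moreover have "finite H"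
    using fork_finite_verts[OF F] unfolding H_def by simp
  ultimately have "card Hon \<le> card H"
    by (meson card_image_le card_mono finite_imageI le_trans)
  also have "card H \<le> card {i0<..<i1}"
  proof (rule card_inj_on_le)
    show "inj_on (depth F) H"
    proof (rule inj_onI)
      fix u v assume "u \<in> H" "v \<in> H" "depth F u = depth F v"
      then have "lbl F u = lbl F v"
        using fork_depth_less[OF F, of u v] fork_depth_less[OF F, of v u]
        unfolding H_def Hon_def by (metis (lifting) linorder_neqE_nat mem_Collect_eq order.irrefl)
      then show "u = v"
        using fork_honest_lbl_unique[OF F] \<open>u \<in> H\<close> \<open>v \<in> H\<close> unfolding H_def Hon_def by blast
    qed
    have "depth F (t ! i0) < depth F v" if "v \<in> H" for v
      using honest_vertex_depth_less[OF F \<open>t ! i0 \<in> verts F\<close> start] that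
      unfolding H_def Hon_def by simp
    then show "depth F ` H \<subseteq> {i0<..<i1}"
      using st depth_nth[OF t \<open>i0 < length t\<close>]
      unfolding H_def Hon_def adversarial_stretch_def by auto
  qed simp
  finally show ?thesis unfolding Hon_def .
qed

text \<open>The honest slots after the start of an adversarial stretch have distinct depths strictly
  inside it, so there are no more of them than adversarial labels on the stretch.\<close>

lemma walk_le_across_adversarial_stretch:
  assumes "is_fork w F" "is_tine F t" "adversarial_stretch w F t i0 i1 e"
    and "honest_vertex w F (t ! i0)" "lbl F (t ! i0) \<le> e"
  shows "walk (take (lbl F (t ! i0)) w) \<le> walk (take e w)"
  using adversarial_stretch_card_le[OF assms(1-3)] honest_slots_card_le[OF assms(1-4)]
    walk_take_diff[OF assms(5), of w] assms(3) unfolding adversarial_stretch_def by linarith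

lemma adversarial_stretch_to_next_honest:
  assumes F: "is_fork w F" and t: "is_tine F t"
    and "i0 < i1" "i1 < length t" "honest_idx w (lbl F (t ! i1))"
    and "\<And>i. i0 < i \<Longrightarrow> i < i1 \<Longrightarrow> \<not> honest_idx w (lbl F (t ! i))"
  shows "adversarial_stretch w F t i0 i1 (lbl F (t ! i1) - 1)"
proof -
  have "lbl F (t ! i) \<le> lbl F (t ! i1) - 1" if "i < i1" for i
    using tine_lbl_less[OF F t that \<open>i1 < length t\<close>] by simp
  moreover have "depth F v < i1"
    if "v \<in> verts F" "honest_idx w (lbl F v)" "lbl F v \<le> lbl F (t ! i1) - 1" for v
  proof -
    have "lbl F v < lbl F (t ! i1)"
      using that(3) assms(5) unfolding honest_idx_def by linarith
    then show ?thesis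
      using fork_depth_less[OF F that(1) is_tine_nth(2)[OF t assms(4)] that(2) assms(5)]
        depth_nth[OF t assms(4)] by simp
  qed
  moreover have "lbl F (t ! i1) - 1 \<le> length w"
    using fork_lbl_le_length[OF F is_tine_nth(2)[OF t assms(4)]] by simp
  ultimately show ?thesis
    using assms(3,4,6) by (simp add: adversarial_stretch_def)
qed

lemma adversarial_stretch_to_end:
  assumes F: "is_fork w F" and vt: "viable w F t" and "i0 < length t"
    and "\<And>i. i0 < i \<Longrightarrow> i < length t \<Longrightarrow> \<not> honest_idx w (lbl F (t ! i))"
  shows "adversarial_stretch w F t i0 (length t) (tine_lbl F t)"
proof -
  have t: "is_tine F t" using vt by (simp add: viable_def)
  have "tine_lbl F t = lbl F (t ! (length t - 1))"
    using t by (simp add: tine_lbl_def is_tine_def last_conv_nth)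
  then have "lbl F (t ! i) \<le> tine_lbl F t" if "i < length t" for i
    using tine_lbl_le[OF F t, of i "length t - 1"] that by simp
  moreover have "depth F v < length t"
    if "v \<in> verts F" "honest_idx w (lbl F v)" "lbl F v \<le> tine_lbl F t" for v
    using vt that \<open>i0 < length t\<close> by (fastforce simp: viable_def honest_vertex_def tine_len_def)
  ultimately show ?thesis
    using assms(3,4) tine_lbl_le_length[OF F t] by (simp add: adversarial_stretch_def)
qed

text \<open>Otherwise the adversarial stretch of the tine that jumps over slot c would cover more honest
  than adversarial slots.\<close>

lemma catalan_slot_on_viable_tine:
  assumes F: "is_fork w F" and vt: "viable w F t"
    and c: "catalan_slot w c" "c \<le> tine_lbl F t"
  shows "\<exists>i<length t. lbl F (t ! i) = c"
proof (rule ccontr)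
  assume not_on_t: "\<not> (\<exists>i<length t. lbl F (t ! i) = c)"
  have t: "is_tine F t" using vt by (simp add: viable_def)
  define I0 where "I0 = {i. i < length t \<and> lbl F (t ! i) < c \<and> honest_vertex w F (t ! i)}"
  have "0 \<in> I0"
    using c(1) t is_tine_nth(1)[OF t] fork_lbl_root[OF F]
    by (auto simp: I0_def catalan_slot_def honest_vertex_def is_tine_def)
  moreover have "finite I0" by (simp add: I0_def)
  ultimately have "Max I0 \<in> I0" and i0_max: "\<And>i. i \<in> I0 \<Longrightarrow> i \<le> Max I0"
    using Max_in by auto
  define i0 where "i0 = Max I0"
  have i0: "i0 < length t" "lbl F (t ! i0) < c" "honest_vertex w F (t ! i0)"
    using \<open>Max I0 \<in> I0\<close> unfolding i0_def I0_def by auto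
  have later_honest: "c < lbl F (t ! i)" if "i0 < i" "i < length t" "honest_idx w (lbl F (t ! i))" for i
    using i0_max[of i] that not_on_t unfolding i0_def I0_def honest_vertex_def by fastforce
  obtain i1 e where stretch: "adversarial_stretch w F t i0 i1 e" and "c \<le> e"
  proof (cases "\<exists>i. i0 < i \<and> i < length t \<and> honest_idx w (lbl F (t ! i))")
    case True
    then obtain i1 where i1: "i0 < i1" "i1 < length t" "honest_idx w (lbl F (t ! i1))"
      and first: "\<And>i. i < i1 \<Longrightarrow> \<not> (i0 < i \<and> i < length t \<and> honest_idx w (lbl F (t ! i)))"
      using exists_least_iff[of "\<lambda>i. i0 < i \<and> i < length t \<and> honest_idx w (lbl F (t ! i))"]
      by blast
    then have "adversarial_stretch w F t i0 i1 (lbl F (t ! i1) - 1)"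
      by (intro adversarial_stretch_to_next_honest[OF F t]) auto
    moreover have "c \<le> lbl F (t ! i1) - 1"
      using later_honest[OF i1] by simp
    ultimately show thesis by (rule that)
  next
    case False
    then show thesis
      using that adversarial_stretch_to_end[OF F vt i0(1)] c(2) by blast
  qed
  then have "walk (take (lbl F (t ! i0)) w) \<le> walk (take e w)"
    using walk_le_across_adversarial_stretch[OF F t stretch i0(3)] i0(2) by simp
  moreover have "walk (take c w) < walk (take (lbl F (t ! i0)) w)"
    using c(1) i0(2) by (simp add: catalan_slot_def)
  moreover have "walk (take e w) \<le> walk (take c w)"
    using c(1) \<open>c \<le> e\<close> stretch by (simp add: catalan_slot_def adversarial_stretch_def)
  ultimately show False by simp
qed

section \<open>Consistency violations leave windows without Catalan slots\<close>

lemma filter_eq_takeWhile_if_sorted_wrt: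
  assumes "sorted_wrt R xs" "\<And>x y. R x y \<Longrightarrow> P y \<Longrightarrow> P x"
  shows "filter P xs = takeWhile P xs"
  using assms(1)
proof (induction xs)
  case (Cons x xs)
  show ?case
  proof (cases "P x")
    case False
    then have "filter P xs = []"
      using Cons.prems assms(2) by (auto simp: filter_empty_conv)
    then show ?thesis using Cons False by simp
  qed (use Cons in simp)
qed simp

lemma trim_slots_eq_takeWhile:
  assumes "is_fork w F" "is_tine F t"
  shows "trim_slots F k t = takeWhile (\<lambda>v. int (lbl F v) \<le> int (tine_lbl F t) - int k) t"
  unfolding trim_slots_def
  using tine_lbl_sorted[OF assms]
  by (intro filter_eq_takeWhile_if_sorted_wrt[where R = "\<lambda>u v. lbl F u < lbl F v"])
    (auto simp: sorted_wrt_map)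

lemma tines_agree_up_to_honest_vertex:
  assumes F: "is_fork w F" and t1: "is_tine F t1" and t2: "is_tine F t2"
    and "honest_idx w c" "i1 < length t1" "i2 < length t2"
    and "lbl F (t1 ! i1) = c" "lbl F (t2 ! i2) = c"
  shows "take (Suc i1) t1 = take (Suc i2) t2"
proof (rule tine_unique)
  show "is_tine F (take (Suc i1) t1)" "is_tine F (take (Suc i2) t2)"
    by (simp_all add: is_tine_take t1 t2)
  have "t1 ! i1 = t2 ! i2"
    using fork_honest_lbl_unique[OF F] is_tine_nth(2) assms by metis
  then show "last (take (Suc i1) t1) = last (take (Suc i2) t2)"
    using assms(5,6) by (simp add: take_Suc_conv_app_nth)
qed

lemma trim_slots_prefix_if_lbl_le:
  assumes F: "is_fork w F" and t1: "is_tine F t1" and t2: "is_tine F t2"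
    and "tine_lbl F t1 \<le> k"
  shows "prefix (trim_slots F k t1) t2"
proof -
  define P where "P v \<longleftrightarrow> int (lbl F v) \<le> int (tine_lbl F t1) - int k" for v
  have trim: "trim_slots F k t1 = takeWhile P t1"
    unfolding P_def by (rule trim_slots_eq_takeWhile[OF F t1])
  have short: "length (takeWhile P t1) \<le> 1"
  proof (rule ccontr)
    assume "\<not> length (takeWhile P t1) \<le> 1"
    then have "1 < length (takeWhile P t1)" by simp
    then have "takeWhile P t1 ! 1 \<in> set (takeWhile P t1)" "takeWhile P t1 ! 1 = t1 ! 1"
      by (rule nth_mem, rule takeWhile_nth)
    then have "P (t1 ! 1)"
      by (metis set_takeWhileD)
    moreover have "0 < lbl F (t1 ! 1)"
      using tine_lbl_less[OF F t1, of 0 1] is_tine_nth(1)[OF t1] fork_lbl_root[OF F]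
        \<open>\<not> length (takeWhile P t1) \<le> 1\<close> length_takeWhile_le[of P t1] by simp
    ultimately show False
      using assms(4) by (simp add: P_def)
  qed
  have "take 1 t1 = take 1 t2"
    using t1 t2 by (cases t1; cases t2) (auto simp: is_tine_def)
  have "takeWhile P t1 = take (length (takeWhile P t1)) t1"
    by (rule takeWhile_eq_take)
  also have "\<dots> = take (length (takeWhile P t1)) (take 1 t2)"
    using short \<open>take 1 t1 = take 1 t2\<close> by (metis min.absorb1 take_take)
  finally show ?thesis
    unfolding trim using prefix_order.trans[OF take_is_prefix take_is_prefix] by metis
qed

text \<open>The window ends at the label of the shorter tine t1: the honest vertex of a Catalan slot in
  it would lie on both viable tines, making the trimmed t1 a prefix of t2.\<close>

lemma violates_slot_CP_catalan_free_window:
  assumes "violates_slot_CP k w"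
  obtains b where "k < b" "b \<le> length w" "\<And>c. b - k < c \<Longrightarrow> c \<le> b \<Longrightarrow> \<not> catalan_slot w c"
proof -
  obtain F t1 t2 where F: "is_fork w F" and v1: "viable w F t1" and v2: "viable w F t2"
    and le: "tine_lbl F t1 \<le> tine_lbl F t2" and not_prefix: "\<not> prefix (trim_slots F k t1) t2"
    using assms unfolding violates_slot_CP_def by blast
  have t1: "is_tine F t1" and t2: "is_tine F t2"
    using v1 v2 by (simp_all add: viable_def)
  define L where "L = tine_lbl F t1"
  define P where "P v \<longleftrightarrow> int (lbl F v) \<le> int L - int k" for v
  have trim: "trim_slots F k t1 = takeWhile P t1"
    unfolding P_def L_def by (rule trim_slots_eq_takeWhile[OF F t1])
  have "k < L"
    using trim_slots_prefix_if_lbl_le[OF F t1 t2, of k] not_prefix unfolding L_def by linarith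
  moreover have "L \<le> length w"
    using tine_lbl_le_length[OF F t1] by (simp add: L_def)
  moreover have "\<not> catalan_slot w c" if window: "L - k < c" "c \<le> L" for c
  proof
    assume cat: "catalan_slot w c"
    obtain i1 where i1: "i1 < length t1" "lbl F (t1 ! i1) = c"
      using catalan_slot_on_viable_tine[OF F v1 cat] window(2) unfolding L_def by blast
    have "c \<le> tine_lbl F t2"
      using window(2) le unfolding L_def by simp
    then obtain i2 where i2: "i2 < length t2" "lbl F (t2 ! i2) = c"
      using catalan_slot_on_viable_tine[OF F v2 cat] by blast
    have common: "take (Suc i1) t1 = take (Suc i2) t2"
      by (rule tines_agree_up_to_honest_vertex[OF F t1 t2 catalan_slot_honest[OF cat] i1(1) i2(1)
            i1(2) i2(2)])
    have "t1 ! i1 \<in> set (take (Suc i1) t1)"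
      using i1(1) by (simp add: take_Suc_conv_app_nth)
    moreover have "\<not> P (t1 ! i1)"
      using window(1) i1(2) by (simp add: P_def)
    ultimately have "takeWhile P (take (Suc i1) t1 @ drop (Suc i1) t1) = takeWhile P (take (Suc i1) t1)"
      by (rule takeWhile_append1)
    then have "takeWhile P t1 = takeWhile P (take (Suc i2) t2)"
      unfolding append_take_drop_id by (simp only: common)
    moreover have "prefix (takeWhile P (take (Suc i2) t2)) t2"
      by (rule prefix_order.trans[OF takeWhile_is_prefix take_is_prefix])
    ultimately show False
      using not_prefix trim by simp
  qed
  ultimately show thesis
    using that[of L] by simp
qed

lemma sorted_wrt_less_nth_add:
  fixes ns :: "nat list"
  assumes "sorted_wrt (<) ns" "i \<le> j" "j < length ns"
  shows "ns ! i + (j - i) \<le> ns ! j"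
  using assms(2,3)
proof (induction j)
  case (Suc j)
  show ?case
  proof (cases "i = Suc j")
    case False
    then have "ns ! i + (j - i) \<le> ns ! j" "ns ! j < ns ! Suc j"
      using Suc assms(1) by (simp_all add: sorted_wrt_nth_less)
    then show ?thesis using False Suc.prems by linarith
  qed simp
qed simp

text \<open>Slots strictly increase along a tine, so the last k blocks of a tine span at least k slots.\<close>

lemma trim_blocks_prefix_trim_slots:
  assumes F: "is_fork w F" and t: "is_tine F t"
  shows "prefix (trim_blocks k t) (trim_slots F k t)"
proof -
  define P where "P v \<longleftrightarrow> int (lbl F v) \<le> int (tine_lbl F t) - int k" for v
  define n where "n = length t - 1"
  have last: "tine_lbl F t = lbl F (t ! n)"
    using t by (simp add: tine_lbl_def n_def last_conv_nth is_tine_def)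
  have "P v" if v: "v \<in> set (trim_blocks k t)" for v
  proof -
    obtain i where i: "i < length t - k" "v = t ! i"
      using v by (auto simp: trim_blocks_def in_set_conv_nth)
    have "lbl F (t ! i) + (n - i) \<le> lbl F (t ! n)"
      using sorted_wrt_less_nth_add[OF tine_lbl_sorted[OF F t], of i n] i(1)
      by (simp add: n_def)
    then show ?thesis
      using i last by (simp add: P_def n_def)
  qed
  then have "takeWhile P t = trim_blocks k t @ takeWhile P (drop (length t - k) t)"
    by (metis append_take_drop_id takeWhile_append2 trim_blocks_def)
  then show ?thesis
    unfolding trim_slots_eq_takeWhile[OF F t] P_def[symmetric] by (simp add: prefixI)
qed

lemma violates_CP_imp_violates_slot_CP:
  assumes "violates_CP k w"
  shows "violates_slot_CP k w"
proof -
  obtain F t1 t2 where F: "is_fork w F" and v1: "viable w F t1" and v2: "viable w F t2"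
    and le: "tine_lbl F t1 \<le> tine_lbl F t2" and not_prefix: "\<not> prefix (trim_blocks k t1) t2"
    using assms unfolding violates_CP_def by blast
  have "prefix (trim_blocks k t1) (trim_slots F k t1)"
    using trim_blocks_prefix_trim_slots[OF F] v1 by (simp add: viable_def)
  then have "\<not> prefix (trim_slots F k t1) t2"
    using not_prefix prefix_order.trans by blast
  then show ?thesis
    unfolding violates_slot_CP_def using F v1 v2 le by blast
qed

section \<open>Detecting Catalan slots online\<close>

text \<open>An online detector for Catalan slots in the window (lo, hi]: cur is the current value
  of the walk, low its running minimum, and cand the walk value at the earliest slot of the
  window that is still a Catalan candidate (a new strict minimum which the walk has not yet
  exceeded).\<close>

record tracker =
  cur :: int
  low :: int
  cand :: "int option"

definition track_step :: "nat \<Rightarrow> nat \<Rightarrow> nat \<Rightarrow> tracker \<Rightarrow> bool \<Rightarrow> tracker" where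
  "track_step lo hi t s x =
    (let c = cur s + (if x then 1 else -1) in
     \<lparr>cur = c, low = min (low s) c,
      cand = (case cand s of
                Some a \<Rightarrow> if c = a + 1 then None else Some a
              | None \<Rightarrow> if lo \<le> t \<and> t < hi \<and> c < low s then Some c else None)\<rparr>)"

definition track :: "nat \<Rightarrow> nat \<Rightarrow> bool list \<Rightarrow> tracker" where
  "track lo hi xs =
    foldl (\<lambda>s (t, x). track_step lo hi t s x) \<lparr>cur = 0, low = 0, cand = None\<rparr> (List.enumerate 0 xs)"

lemma track_Nil: "track lo hi [] = \<lparr>cur = 0, low = 0, cand = None\<rparr>"
  by (simp add: track_def)

lemma track_snoc: "track lo hi (xs @ [x]) = track_step lo hi (length xs) (track lo hi xs) x"
  by (simp add: track_def enumerate_append_eq)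

lemma catalan_slot_snoc:
  assumes "catalan_slot xs c" "walk (xs @ [x]) \<le> walk (take c xs)"
  shows "catalan_slot (xs @ [x]) c"
  using assms unfolding catalan_slot_def by (auto simp: le_Suc_eq)

lemma catalan_slot_snoc_new_minimum:
  assumes "\<forall>j\<le>length xs. m \<le> walk (take j xs)" "walk (xs @ [x]) < m"
  shows "catalan_slot (xs @ [x]) (Suc (length xs))"
  using assms unfolding catalan_slot_def by (auto simp: less_Suc_eq_le)

definition track_inv :: "nat \<Rightarrow> nat \<Rightarrow> bool list \<Rightarrow> tracker \<Rightarrow> bool" where
  "track_inv lo hi xs s \<longleftrightarrow> cur s = walk xs \<and> (\<forall>j\<le>length xs. low s \<le> walk (take j xs)) \<and>
     (\<forall>a. cand s = Some a \<longrightarrow> (\<exists>c. lo < c \<and> c \<le> hi \<and> catalan_slot xs c \<and> walk (take c xs) = a))"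

lemma track_inv_step:
  assumes inv: "track_inv lo hi xs s"
  shows "track_inv lo hi (xs @ [x]) (track_step lo hi (length xs) s x)"
proof -
  have cur: "cur s = walk xs" and low: "\<forall>j\<le>length xs. low s \<le> walk (take j xs)"
    using inv by (simp_all add: track_inv_def)
  define c where "c = cur s + (if x then 1 else -1)"
  have c_walk: "c = walk (xs @ [x])"
    by (simp add: c_def cur)
  have step: "track_step lo hi (length xs) s x =
    \<lparr>cur = c, low = min (low s) c,
     cand = (case cand s of
               Some a \<Rightarrow> if c = a + 1 then None else Some a
             | None \<Rightarrow> if lo \<le> length xs \<and> length xs < hi \<and> c < low s then Some c else None)\<rparr>"
    unfolding c_def track_step_def Let_def ..
  have "\<forall>j\<le>length (xs @ [x]). min (low s) c \<le> walk (take j (xs @ [x]))"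
    using low by (auto simp: c_walk le_Suc_eq)
  moreover have "\<exists>c'. lo < c' \<and> c' \<le> hi \<and> catalan_slot (xs @ [x]) c' \<and> walk (take c' (xs @ [x])) = a"
    if a: "cand (track_step lo hi (length xs) s x) = Some a" for a
  proof (cases "cand s")
    case None
    then have "lo \<le> length xs" "length xs < hi" "c < low s" "a = c"
      using a by (auto simp: step split: if_splits)
    then show ?thesis
      using catalan_slot_snoc_new_minimum[OF low, of x] by (intro exI[of _ "Suc (length xs)"]) (simp add: c_walk)
  next
    case (Some a')
    then have "a' = a" "c \<noteq> a + 1"
      using a by (auto simp: step split: if_splits)
    moreover obtain c' where c': "lo < c'" "c' \<le> hi" "catalan_slot xs c'" "walk (take c' xs) = a"
      using inv Some \<open>a' = a\<close> by (auto simp: track_inv_def)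
    moreover have "walk xs \<le> a"
      using c' by (auto simp: catalan_slot_def)
    ultimately have "walk (xs @ [x]) \<le> walk (take c' xs)"
      using c_walk c_def cur by (auto split: if_splits)
    then show ?thesis
      using catalan_slot_snoc[OF c'(3)] c' by (intro exI[of _ c']) (auto simp: catalan_slot_def)
  qed
  ultimately show ?thesis
    by (simp add: track_inv_def step c_walk)
qed

lemma track_inv_track: "track_inv lo hi xs (track lo hi xs)"
proof (induction xs rule: rev_induct)
  case Nil
  then show ?case by (simp add: track_inv_def track_Nil catalan_slot_def)
next
  case (snoc x xs)
  then show ?case by (simp add: track_snoc track_inv_step)
qed

definition tracker_ordered :: "tracker \<Rightarrow> bool" where
  "tracker_ordered s \<longleftrightarrow> low s \<le> cur s \<and> (\<forall>a. cand s = Some a \<longrightarrow> cur s \<le> a)"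

lemma tracker_ordered_track: "tracker_ordered (track lo hi xs)"
  using track_inv_track[of lo hi xs]
  by (fastforce simp: track_inv_def tracker_ordered_def catalan_slot_def)

lemma track_cand_catalan_slot:
  assumes "cand (track lo hi xs) = Some a"
  obtains c where "lo < c" "c \<le> hi" "catalan_slot xs c"
  using track_inv_track[of lo hi xs] assms by (auto simp: track_inv_def)

text \<open>The candidate a stops being a Catalan slot as soon as the walk reaches a + 1.\<close>

definition barrier :: "tracker \<Rightarrow> int" where
  "barrier s = (case cand s of None \<Rightarrow> cur s | Some a \<Rightarrow> a + 1)"

lemma track_step_up:
  assumes "tracker_ordered s"
  shows "cur (track_step lo hi t s True) = cur s + 1"
    and "low (track_step lo hi t s True) = low s"
    and "barrier (track_step lo hi t s True) = barrier s + (if cand s = None then 1 else 0)"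
  using assms
  by (cases "cand s"; simp add: track_step_def Let_def tracker_ordered_def barrier_def)+

lemma track_step_down:
  assumes "tracker_ordered s"
  shows "cur (track_step lo hi t s False) = cur s - 1"
    and "low (track_step lo hi t s False) = low s - (if cur s = low s then 1 else 0)"
    and "barrier (track_step lo hi t s False) =
      barrier s - (if cand s = None \<and> \<not> (lo \<le> t \<and> t < hi \<and> cur s = low s) then 1 else 0)"
  using assms
  by (cases "cand s"; simp add: track_step_def Let_def tracker_ordered_def barrier_def)+

section \<open>Potentials\<close>

definition nu :: "real \<Rightarrow> real" where "nu e = 1 + e\<^sup>2 / 2"

definition lam :: "real \<Rightarrow> real" where "lam e = 1 + e"

definition odds :: "real \<Rightarrow> real" where "odds e = (1 + e) / (1 - e)"

definition rate :: "real \<Rightarrow> real" where "rate e = 1 - e ^ 3 / 4"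

lemma potential_constants:
  assumes "0 < e" "e < 1"
  shows "1 \<le> nu e" "nu e \<le> lam e" "lam e \<le> odds e" "0 \<le> rate e" "rate e \<le> 1"
proof -
  show "1 \<le> nu e" by (simp add: nu_def)
  show "nu e \<le> lam e"
    using assms by (simp add: nu_def lam_def power2_eq_square mult_left_le_one_le)
  show "lam e \<le> odds e"
    using assms by (simp add: lam_def odds_def field_simps mult_left_le_one_le)
  show "0 \<le> rate e" "rate e \<le> 1"
    using assms power_le_one[of e 3] by (simp_all add: rate_def)
qed

lemma nu_step_bound:
  assumes "0 < e" "e < 1"
  shows "(1 - e) / 2 * nu e + (1 + e) / 2 / nu e \<le> rate e"
proof -
  have "8 * (rate e * nu e - ((1 - e) / 2 * nu e ^ 2 + (1 + e) / 2)) = e ^ 3 * (2 - e)"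
    by (simp add: rate_def nu_def field_simps power2_eq_square power3_eq_cube)
  moreover have "0 \<le> e ^ 3 * (2 - e)" using assms by simp
  moreover have "0 < nu e" by (simp add: nu_def add_pos_nonneg)
  ultimately show ?thesis
    by (simp add: field_simps power2_eq_square)
qed

lemma nu_step_bound_at_minimum:
  assumes "0 < e"
  shows "(1 - e) / 2 * nu e + (1 + e) / 2 \<le> rate e + (1 - rate e) * (1 + 1 / e)"
proof -
  have "rate e + (1 - rate e) * (1 + 1 / e) - ((1 - e) / 2 * nu e + (1 + e) / 2) = e ^ 3 / 4"
    using assms by (simp add: rate_def nu_def field_simps power2_eq_square power3_eq_cube)
  moreover have "0 \<le> e ^ 3 / 4" using assms by simp
  ultimately show ?thesis by linarith
qed

lemma lam_step_bounds:
  assumes e: "0 < e" "e < 1"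
  shows "(1 - e) / 2 * lam e + (1 + e) / 2 * (nu e / lam e) \<le> rate e"
    and "(1 - e) / 2 * lam e + (1 + e) / 2 / lam e \<le> rate e"
    and "(1 - e) / 2 * nu e + (1 + e) / 2 * (nu e / lam e) \<le> rate e"
proof -
  have "rate e - ((1 - e) / 2 * lam e + (1 + e) / 2 * (nu e / lam e)) = (e\<^sup>2 - e ^ 3) / 4"
    using e by (simp add: rate_def nu_def lam_def field_simps power2_eq_square power3_eq_cube)
  moreover have "e ^ 3 \<le> e\<^sup>2"
    using e by (simp add: power2_eq_square power3_eq_cube mult_left_le_one_le)
  then have "0 \<le> (e\<^sup>2 - e ^ 3) / 4" by simp
  ultimately show *: "(1 - e) / 2 * lam e + (1 + e) / 2 * (nu e / lam e) \<le> rate e"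
    by linarith
  have b: "1 \<le> nu e" "nu e \<le> lam e"
    using potential_constants[OF e] by simp_all
  then have "(1 + e) / 2 / lam e \<le> (1 + e) / 2 * (nu e / lam e)"
    using e by (simp add: divide_right_mono)
  then show "(1 - e) / 2 * lam e + (1 + e) / 2 / lam e \<le> rate e"
    using * by linarith
  have "(1 - e) / 2 * nu e \<le> (1 - e) / 2 * lam e"
    using b e by (simp add: mult_left_mono)
  then show "(1 - e) / 2 * nu e + (1 + e) / 2 * (nu e / lam e) \<le> rate e"
    using * by linarith
qed

lemma potential_factors_ordered:
  assumes e: "0 < e" "e < 1"
  shows "1 / nu e \<le> nu e" "nu e / lam e \<le> nu e" "nu e / lam e \<le> lam e" "1 / lam e \<le> lam e"
    and "1 / odds e \<le> odds e"
proof -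
  have b: "1 \<le> nu e" "nu e \<le> lam e" "lam e \<le> odds e"
    using potential_constants[OF e] by simp_all
  have inv_le: "1 / x \<le> x" if "1 \<le> x" for x :: real
    using that by (simp add: divide_le_eq) (metis mult_mono order_trans zero_le_one mult_1)
  show "1 / nu e \<le> nu e" "1 / lam e \<le> lam e" "1 / odds e \<le> odds e"
    using b by (simp_all add: inv_le)
  show "nu e / lam e \<le> nu e"
    using b by (simp add: divide_le_eq mult_le_cancel_left1)
  have "nu e \<le> lam e * lam e"
    using b mult_mono[of 1 "lam e" "nu e" "lam e"] by simp
  then show "nu e / lam e \<le> lam e"
    using b by (simp add: divide_le_eq)
qed

lemma odds_step_eq:
  assumes "0 < e" "e < 1"
  shows "(1 - e) / 2 * odds e + (1 + e) / 2 / odds e = 1"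
proof -
  have "e * e \<le> e" using assms by (simp add: mult_left_le_one_le)
  then have "e * e \<noteq> 1" using assms by linarith
  then show ?thesis using assms by (simp add: odds_def field_simps)
qed

text \<open>Psi bounds the probability that the walk ever climbs from cur to the barrier (gambler's ruin
  with ratio odds e = (1 + e) / (1 - e)). Phi trades this for a contraction by rate e in every step
  of the window, nu e penalising the distance of the barrier from the running minimum.\<close>

definition Phi :: "real \<Rightarrow> tracker \<Rightarrow> real" where
  "Phi e s = nu e powi (barrier s - low s) * lam e powi (cur s - barrier s)"

definition Psi :: "real \<Rightarrow> tracker \<Rightarrow> real" where
  "Psi e s = odds e powi (cur s - barrier s)"

lemma power_int_shift:
  assumes "(x :: real) \<noteq> 0" "d = n - m"
  shows "x powi n = x powi m * x powi d"
  using power_int_add[of x m d] assms by simp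

lemma Phi_shift:
  assumes "0 < e"
  shows "Phi e s' = Phi e s * nu e powi ((barrier s' - barrier s) - (low s' - low s))
    * lam e powi ((cur s' - cur s) - (barrier s' - barrier s))"
proof -
  have "0 < nu e" "0 < lam e"
    using assms by (simp_all add: nu_def lam_def add_pos_nonneg)
  then have "nu e powi (barrier s' - low s') =
      nu e powi (barrier s - low s) * nu e powi ((barrier s' - barrier s) - (low s' - low s))"
    "lam e powi (cur s' - barrier s') =
      lam e powi (cur s - barrier s) * lam e powi ((cur s' - cur s) - (barrier s' - barrier s))"
    by (auto intro!: power_int_shift)
  then show ?thesis
    unfolding Phi_def by simp
qed

lemma Phi_track_step_up:
  assumes "0 < e" "tracker_ordered s"
  shows "Phi e (track_step lo hi t s True) = Phi e s * (if cand s = None then nu e else lam e)"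
  using Phi_shift[OF assms(1), of "track_step lo hi t s True" s] track_step_up[OF assms(2)]
  by (cases "cand s") simp_all

lemma Phi_track_step_down:
  assumes "0 < e" "tracker_ordered s"
  shows "Phi e (track_step lo hi t s False) = Phi e s *
    (if cand s = None then
       if cur s \<noteq> low s then 1 / nu e else if lo \<le> t \<and> t < hi then nu e / lam e else 1
     else if cur s = low s then nu e / lam e else 1 / lam e)"
  using Phi_shift[OF assms(1), of "track_step lo hi t s False" s] track_step_down[OF assms(2)]
  by (cases "cand s"; cases "cur s = low s"; cases "lo \<le> t \<and> t < hi")
    (auto simp: power_int_minus_divide)

lemma Phi_nonneg: "0 < e \<Longrightarrow> 0 \<le> Phi e s"
  by (simp add: Phi_def nu_def lam_def add_pos_nonneg)

lemma Phi_at_minimum: "cand s = None \<Longrightarrow> cur s = low s \<Longrightarrow> Phi e s = 1"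
  by (simp add: Phi_def barrier_def)

lemma Phi_track_step_mono:
  assumes e: "0 < e" "e < 1" and s: "tracker_ordered s"
  shows "Phi e (track_step lo hi t s False) \<le> Phi e (track_step lo hi t s True)"
proof -
  have "(if cand s = None then
          if cur s \<noteq> low s then 1 / nu e else if lo \<le> t \<and> t < hi then nu e / lam e else 1
        else if cur s = low s then nu e / lam e else 1 / lam e)
      \<le> (if cand s = None then nu e else lam e)"
    using potential_factors_ordered[OF e] potential_constants[OF e] by auto
  then show ?thesis
    unfolding Phi_track_step_up[OF e(1) s] Phi_track_step_down[OF e(1) s]
    using Phi_nonneg[OF e(1)] by (simp add: mult_left_mono)
qed

lemma Phi_track_step_le:
  assumes e: "0 < e" "e < 1" and s: "tracker_ordered s"
  shows "(1 - e) / 2 * Phi e (track_step lo hi t s True) + (1 + e) / 2 * Phi e (track_step lo hi t s False)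
      \<le> rate e * Phi e s +
        (if cand s = None \<and> cur s = low s \<and> \<not> (lo \<le> t \<and> t < hi)
         then (1 - rate e) * (1 + 1 / e) else 0)"
proof -
  define u where "u = (if cand s = None then nu e else lam e)"
  define d where "d = (if cand s = None then
       if cur s \<noteq> low s then 1 / nu e else if lo \<le> t \<and> t < hi then nu e / lam e else 1
     else if cur s = low s then nu e / lam e else 1 / lam e)"
  have up: "Phi e (track_step lo hi t s True) = Phi e s * u"
    unfolding u_def by (rule Phi_track_step_up[OF e(1) s])
  have dn: "Phi e (track_step lo hi t s False) = Phi e s * d"
    unfolding d_def by (rule Phi_track_step_down[OF e(1) s])
  let ?slack = "cand s = None \<and> cur s = low s \<and> \<not> (lo \<le> t \<and> t < hi)"
  show ?thesis
  proof (cases ?slack)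
    case True
    then show ?thesis
      using nu_step_bound_at_minimum[OF e(1)] Phi_at_minimum[of s e]
      unfolding up dn u_def d_def by auto
  next
    case False
    then have "(1 - e) / 2 * u + (1 + e) / 2 * d \<le> rate e"
      using nu_step_bound[OF e] lam_step_bounds[OF e] unfolding u_def d_def by auto
    then have "Phi e s * ((1 - e) / 2 * u + (1 + e) / 2 * d) \<le> Phi e s * rate e"
      using Phi_nonneg[OF e(1)] by (simp add: mult_left_mono)
    moreover have "(1 - e) / 2 * (Phi e s * u) + (1 + e) / 2 * (Phi e s * d) =
        Phi e s * ((1 - e) / 2 * u + (1 + e) / 2 * d)"
      by (simp add: algebra_simps)
    ultimately show ?thesis
      unfolding up dn if_not_P[OF False] by (simp add: mult.commute)
  qed
qed

lemma Psi_nonneg: "0 < e \<Longrightarrow> e < 1 \<Longrightarrow> 0 \<le> Psi e s"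
  using potential_constants[of e] by (simp add: Psi_def)

lemma Psi_track_step:
  assumes e: "0 < e" "e < 1" and s: "tracker_ordered s" and t: "hi \<le> t"
  shows "Psi e (track_step lo hi t s False) \<le> Psi e (track_step lo hi t s True)"
    and "(1 - e) / 2 * Psi e (track_step lo hi t s True) + (1 + e) / 2 * Psi e (track_step lo hi t s False)
      = Psi e s"
proof -
  have odds: "1 \<le> odds e"
    using potential_constants[OF e] by linarith
  have shift: "Psi e s' = Psi e s * odds e powi ((cur s' - cur s) - (barrier s' - barrier s))" for s'
    unfolding Psi_def by (rule power_int_shift) (use odds in simp_all)
  have up: "Psi e (track_step lo hi t s True) = Psi e s * (if cand s = None then 1 else odds e)"
    using shift[of "track_step lo hi t s True"] track_step_up[OF s] by (cases "cand s") simp_all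
  have dn: "Psi e (track_step lo hi t s False) = Psi e s * (if cand s = None then 1 else 1 / odds e)"
    using shift[of "track_step lo hi t s False"] track_step_down[OF s] t
    by (cases "cand s") (simp_all add: power_int_minus_divide)
  have "1 / odds e \<le> odds e"
    using potential_factors_ordered[OF e] by simp
  moreover have "0 \<le> Psi e s"
    using odds by (simp add: Psi_def)
  ultimately show "Psi e (track_step lo hi t s False) \<le> Psi e (track_step lo hi t s True)"
    unfolding up dn by (simp add: mult_left_mono)
  show "(1 - e) / 2 * Psi e (track_step lo hi t s True) + (1 + e) / 2 * Psi e (track_step lo hi t s False)
      = Psi e s"
  proof (cases "cand s")
    case None
    then show ?thesis
      unfolding up dn by (simp add: field_simps)
  next
    case (Some a)
    have "(1 - e) / 2 * (Psi e s * odds e) + (1 + e) / 2 * (Psi e s * (1 / odds e)) =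
        Psi e s * ((1 - e) / 2 * odds e + (1 + e) / 2 / odds e)"
      by (simp add: algebra_simps)
    then show ?thesis
      unfolding up dn odds_step_eq[OF e] using Some by simp
  qed
qed

lemma power_int_le_power_int_base:
  assumes "0 < (x :: real)" "x \<le> y" "n \<le> 0"
  shows "y powi n \<le> x powi n"
proof -
  have "0 < x powi (- n)" "x powi (- n) \<le> y powi (- n)"
    using assms by (simp_all add: power_int_mono)
  then have "1 / y powi (- n) \<le> 1 / x powi (- n)"
    by (simp add: divide_left_mono)
  then show ?thesis
    using power_int_minus_divide[of x "- n"] power_int_minus_divide[of y "- n"] by simp
qed

lemma Psi_le_Phi:
  assumes e: "0 < e" "e < 1" and s: "tracker_ordered s"
  shows "Psi e s \<le> Phi e s"
proof -
  note b = potential_constants[OF e]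
  have "cur s \<le> barrier s" "low s \<le> barrier s"
    using s by (auto simp: tracker_ordered_def barrier_def split: option.split)
  have "Psi e s \<le> lam e powi (cur s - barrier s)"
    unfolding Psi_def using b e \<open>cur s \<le> barrier s\<close>
    by (intro power_int_le_power_int_base) (simp_all add: lam_def)
  also have "\<dots> \<le> nu e powi (barrier s - low s) * lam e powi (cur s - barrier s)"
  proof -
    have "0 \<le> lam e powi (cur s - barrier s)"
      using b by simp
    then show ?thesis
      using b(1) \<open>low s \<le> barrier s\<close> by (simp add: mult_le_cancel_right1)
  qed
  finally show ?thesis
    unfolding Phi_def .
qed

section \<open>Expectations over prefixes of the characteristic string\<close>

definition prefix_prob :: "bool list pmf \<Rightarrow> bool list \<Rightarrow> real" where
  "prefix_prob p xs = measure_pmf.prob p {w. take (length xs) w = xs}"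

definition prefix_expectation :: "bool list pmf \<Rightarrow> nat \<Rightarrow> (bool list \<Rightarrow> real) \<Rightarrow> real" where
  "prefix_expectation p n f = (\<Sum>xs | length xs = n. prefix_prob p xs * f xs)"

lemma finite_bool_lists_length: "finite {xs :: bool list. length xs = n}"
  using finite_lists_length_eq[of "UNIV :: bool set" n] by simp

lemma sum_bool_lists_length_Suc:
  "(\<Sum>ys | length ys = Suc n. f ys) = (\<Sum>xs | length xs = n. f (xs @ [True]) + f (xs @ [False]))"
proof -
  define L where "L = {xs :: bool list. length xs = n}"
  have "{ys :: bool list. length ys = Suc n} = (\<lambda>xs. xs @ [True]) ` L \<union> (\<lambda>xs. xs @ [False]) ` L"
    unfolding L_def by (auto simp: length_Suc_conv_rev image_iff)
  moreover have "(\<lambda>xs. xs @ [True]) ` L \<inter> (\<lambda>xs. xs @ [False]) ` L = {}"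
    by auto
  moreover have "inj_on (\<lambda>xs. xs @ [b]) L" for b
    by (simp add: inj_on_def)
  moreover have "finite L"
    unfolding L_def by (rule finite_bool_lists_length)
  ultimately show ?thesis
    by (simp add: sum.union_disjoint sum.reindex sum.distrib flip: L_def)
qed

lemma prefix_expectation_mono:
  "(\<And>xs. length xs = n \<Longrightarrow> f xs \<le> g xs) \<Longrightarrow> prefix_expectation p n f \<le> prefix_expectation p n g"
  unfolding prefix_expectation_def by (intro sum_mono mult_left_mono) (auto simp: prefix_prob_def)

lemma prefix_expectation_affine:
  "prefix_expectation p n (\<lambda>xs. r * f xs + c) =
    r * prefix_expectation p n f + c * prefix_expectation p n (\<lambda>_. 1)"
  unfolding prefix_expectation_def by (simp add: algebra_simps sum.distrib sum_distrib_left)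

locale eps_martingale_source =
  fixes p :: "bool list pmf" and T :: nat and e :: real
  assumes support_length: "set_pmf p \<subseteq> {w. length w = T}"
    and martingale: "eps_martingale e T p"
    and e_pos: "0 < e" and e_less_1: "e < 1"
begin

lemma expectation_take_eq_prefix_expectation:
  assumes "n \<le> T"
  shows "measure_pmf.expectation p (\<lambda>w. f (take n w)) = prefix_expectation p n f"
proof -
  have "measure_pmf.expectation p (\<lambda>w. f (take n w)) = measure_pmf.expectation (map_pmf (take n) p) f"
    by simp
  also have "\<dots> = (\<Sum>xs | length xs = n. pmf (map_pmf (take n) p) xs *\<^sub>R f xs)"
    using support_length assms
    by (intro integral_measure_pmf[OF finite_bool_lists_length]) auto
  also have "\<dots> = prefix_expectation p n f"
    unfolding prefix_expectation_def prefix_prob_def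
    by (intro sum.cong refl) (auto simp: pmf_map vimage_def)
  finally show ?thesis .
qed

lemma prefix_expectation_const:
  assumes "n \<le> T"
  shows "prefix_expectation p n (\<lambda>_. c) = c"
  using expectation_take_eq_prefix_expectation[OF assms, of "\<lambda>_. c"] by simp

lemma prob_eq_prefix_expectation: "measure_pmf.prob p A = prefix_expectation p T (indicator A)"
proof -
  have "A \<inter> set_pmf p = take T -` A \<inter> set_pmf p"
    using support_length by auto
  then have "measure_pmf.prob p A = measure_pmf.prob p (take T -` A)"
    by (metis measure_Int_set_pmf)
  also have "\<dots> = measure_pmf.expectation p (\<lambda>w. indicator A (take T w))"
    by (simp add: indicator_vimage[symmetric])
  also have "\<dots> = prefix_expectation p T (indicator A)"
    by (rule expectation_take_eq_prefix_expectation) simp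
  finally show ?thesis .
qed

lemma prefix_prob_snoc:
  assumes "length xs < T"
  shows "prefix_prob p (xs @ [b]) = measure_pmf.prob p {w. take (length xs) w = xs \<and> w ! length xs = b}"
proof -
  have "take (length (xs @ [b])) w = xs @ [b] \<longleftrightarrow> take (length xs) w = xs \<and> w ! length xs = b"
    if "w \<in> set_pmf p" for w
  proof -
    have "length xs < length w"
      using that support_length assms by auto
    then show ?thesis
      by (simp add: take_Suc_conv_app_nth)
  qed
  then have "{w. take (length (xs @ [b])) w = xs @ [b]} \<inter> set_pmf p =
      {w. take (length xs) w = xs \<and> w ! length xs = b} \<inter> set_pmf p"
    by blast
  then show ?thesis
    unfolding prefix_prob_def by (metis (no_types) measure_Int_set_pmf)
qed

lemma prefix_prob_split:
  assumes "length xs < T"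
  shows "prefix_prob p (xs @ [True]) + prefix_prob p (xs @ [False]) = prefix_prob p xs"
proof -
  have "{w. take (length xs) w = xs} =
      {w. take (length xs) w = xs \<and> w ! length xs = True} \<union> {w. take (length xs) w = xs \<and> w ! length xs = False}"
    by auto
  then show ?thesis
    unfolding prefix_prob_snoc[OF assms]
    by (simp add: prefix_prob_def measure_pmf.finite_measure_Union[symmetric] disjoint_iff)
qed

lemma prefix_prob_adversarial_le:
  assumes "length xs < T"
  shows "prefix_prob p (xs @ [True]) \<le> (1 - e) / 2 * prefix_prob p xs"
proof -
  have "prefix_prob p (xs @ [True]) = measure_pmf.prob p {w. take (length xs) w = xs \<and> w ! length xs}"
    using prefix_prob_snoc[OF assms, of True] by simp
  also have "\<dots> \<le> (1 - e) / 2 * measure_pmf.prob p {w. take (length xs) w = xs}"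
    using martingale assms unfolding eps_martingale_def by blast
  finally show ?thesis
    by (simp add: prefix_prob_def)
qed


text \<open>Since g is larger after an adversarial symbol, the expectation can only grow when the
  conditional probability of that symbol is raised to the bound (1 - e) / 2.\<close>

lemma prefix_expectation_step:
  assumes "t < T"
    and g: "\<And>xs. length xs = t \<Longrightarrow> 0 \<le> g (xs @ [False]) \<and> g (xs @ [False]) \<le> g (xs @ [True]) \<and>
      (1 - e) / 2 * g (xs @ [True]) + (1 + e) / 2 * g (xs @ [False]) \<le> h xs"
  shows "prefix_expectation p (Suc t) g \<le> prefix_expectation p t h"
proof -
  have "prefix_prob p (xs @ [True]) * g (xs @ [True]) + prefix_prob p (xs @ [False]) * g (xs @ [False])
      \<le> prefix_prob p xs * h xs" if xs: "length xs = t" for xs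
  proof -
    define P where "P = prefix_prob p xs"
    define a where "a = prefix_prob p (xs @ [True])"
    define gT where "gT = g (xs @ [True])"
    define gF where "gF = g (xs @ [False])"
    have split: "prefix_prob p (xs @ [False]) = P - a"
      using prefix_prob_split[of xs] xs \<open>t < T\<close> unfolding P_def a_def by simp
    have "a \<le> (1 - e) / 2 * P"
      using prefix_prob_adversarial_le[of xs] xs \<open>t < T\<close> unfolding P_def a_def by simp
    moreover have "0 \<le> gT - gF"
      using g[OF xs] by (simp add: gT_def gF_def)
    ultimately have adv: "a * (gT - gF) \<le> (1 - e) / 2 * P * (gT - gF)"
      by (rule mult_right_mono)
    have "0 \<le> P"
      by (simp add: P_def prefix_prob_def)
    have "a * gT + (P - a) * gF = a * (gT - gF) + P * gF"
      by (simp add: algebra_simps)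
    also have "\<dots> \<le> (1 - e) / 2 * P * (gT - gF) + P * gF"
      using adv by simp
    also have "\<dots> = P * ((1 - e) / 2 * gT + (1 + e) / 2 * gF)"
      by (simp add: field_simps)
    also have "\<dots> \<le> P * h xs"
      using g[OF xs] \<open>0 \<le> P\<close> by (simp add: mult_left_mono gT_def gF_def)
    finally show ?thesis
      unfolding split a_def gT_def gF_def P_def .
  qed
  then show ?thesis
    unfolding prefix_expectation_def sum_bool_lists_length_Suc by (intro sum_mono) simp
qed

section \<open>Windows without Catalan slots are unlikely\<close>

lemma expected_Phi_le:
  assumes "t \<le> T"
  shows "prefix_expectation p t (\<lambda>xs. Phi e (track lo hi xs)) \<le> 1 + 1 / e"
  using assms
proof (induction t)
  case 0
  have "prefix_expectation p 0 (\<lambda>xs. Phi e (track lo hi xs)) \<le> prefix_expectation p 0 (\<lambda>_. 1)"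
    by (rule prefix_expectation_mono) (simp add: track_Nil Phi_def barrier_def)
  moreover have "0 \<le> 1 / e"
    using e_pos by simp
  ultimately show ?case
    using prefix_expectation_const[of 0 1] by linarith
next
  case (Suc t)
  define K where "K = 1 + 1 / e"
  have "prefix_expectation p (Suc t) (\<lambda>xs. Phi e (track lo hi xs)) \<le>
      prefix_expectation p t (\<lambda>xs. rate e * Phi e (track lo hi xs) + (1 - rate e) * K)"
  proof (rule prefix_expectation_step)
    fix xs :: "bool list" assume "length xs = t"
    have "0 \<le> (1 - rate e) * K"
      using potential_constants[OF e_pos e_less_1] e_pos by (simp add: K_def)
    then show "0 \<le> Phi e (track lo hi (xs @ [False])) \<and>
        Phi e (track lo hi (xs @ [False])) \<le> Phi e (track lo hi (xs @ [True])) \<and>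
        (1 - e) / 2 * Phi e (track lo hi (xs @ [True])) + (1 + e) / 2 * Phi e (track lo hi (xs @ [False]))
          \<le> rate e * Phi e (track lo hi xs) + (1 - rate e) * K"
      using Phi_track_step_mono[OF e_pos e_less_1 tracker_ordered_track[of lo hi xs], of lo hi "length xs"]
        Phi_track_step_le[OF e_pos e_less_1 tracker_ordered_track[of lo hi xs], of lo hi "length xs"]
        Phi_nonneg[OF e_pos] unfolding track_snoc K_def by (smt (verit))
  qed (use Suc.prems in simp)
  also have "\<dots> = rate e * prefix_expectation p t (\<lambda>xs. Phi e (track lo hi xs)) + (1 - rate e) * K"
    using prefix_expectation_affine prefix_expectation_const Suc.prems by simp
  also have "\<dots> \<le> rate e * K + (1 - rate e) * K"
    using Suc potential_constants[OF e_pos e_less_1] by (simp add: K_def mult_left_mono)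
  finally show ?case
    by (simp add: K_def algebra_simps)
qed

lemma expected_Phi_window_le:
  assumes "lo + d \<le> hi" "hi \<le> T"
  shows "prefix_expectation p (lo + d) (\<lambda>xs. Phi e (track lo hi xs)) \<le> rate e ^ d * (1 + 1 / e)"
  using assms
proof (induction d)
  case 0
  then show ?case using expected_Phi_le by simp
next
  case (Suc d)
  have "prefix_expectation p (Suc (lo + d)) (\<lambda>xs. Phi e (track lo hi xs)) \<le>
      prefix_expectation p (lo + d) (\<lambda>xs. rate e * Phi e (track lo hi xs))"
  proof (rule prefix_expectation_step)
    fix xs :: "bool list" assume "length xs = lo + d"
    then show "0 \<le> Phi e (track lo hi (xs @ [False])) \<and>
        Phi e (track lo hi (xs @ [False])) \<le> Phi e (track lo hi (xs @ [True])) \<and>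
        (1 - e) / 2 * Phi e (track lo hi (xs @ [True])) + (1 + e) / 2 * Phi e (track lo hi (xs @ [False]))
          \<le> rate e * Phi e (track lo hi xs)"
      using Phi_track_step_mono[OF e_pos e_less_1 tracker_ordered_track[of lo hi xs], of lo hi "length xs"]
        Phi_track_step_le[OF e_pos e_less_1 tracker_ordered_track[of lo hi xs], of lo hi "length xs"]
        Phi_nonneg[OF e_pos] Suc.prems unfolding track_snoc by auto
  qed (use Suc.prems in simp)
  also have "\<dots> \<le> rate e * (rate e ^ d * (1 + 1 / e))"
    using Suc potential_constants[OF e_pos e_less_1]
    by (simp add: prefix_expectation_affine[where c = 0, simplified] mult_left_mono)
  finally show ?case
    by simp
qed

lemma expected_Psi_after_window_le:
  assumes "lo \<le> hi" "hi + d \<le> T"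
  shows "prefix_expectation p (hi + d) (\<lambda>xs. Psi e (track lo hi xs)) \<le> rate e ^ (hi - lo) * (1 + 1 / e)"
  using assms
proof (induction d)
  case 0
  have "prefix_expectation p hi (\<lambda>xs. Psi e (track lo hi xs)) \<le>
      prefix_expectation p hi (\<lambda>xs. Phi e (track lo hi xs))"
    by (rule prefix_expectation_mono) (rule Psi_le_Phi[OF e_pos e_less_1 tracker_ordered_track])
  then show ?case
    using expected_Phi_window_le[of lo "hi - lo" hi] 0 by simp
next
  case (Suc d)
  have "prefix_expectation p (Suc (hi + d)) (\<lambda>xs. Psi e (track lo hi xs)) \<le>
      prefix_expectation p (hi + d) (\<lambda>xs. Psi e (track lo hi xs))"
  proof (rule prefix_expectation_step)
    fix xs :: "bool list" assume "length xs = hi + d"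
    then show "0 \<le> Psi e (track lo hi (xs @ [False])) \<and>
        Psi e (track lo hi (xs @ [False])) \<le> Psi e (track lo hi (xs @ [True])) \<and>
        (1 - e) / 2 * Psi e (track lo hi (xs @ [True])) + (1 + e) / 2 * Psi e (track lo hi (xs @ [False]))
          \<le> Psi e (track lo hi xs)"
      using Psi_track_step[OF e_pos e_less_1 tracker_ordered_track[of lo hi xs], of hi "length xs" lo]
        Psi_nonneg[OF e_pos e_less_1] unfolding track_snoc by auto
  qed (use Suc.prems in simp)
  then show ?case
    using Suc by simp
qed


lemma prob_catalan_free_window_le:
  assumes "lo \<le> hi" "hi \<le> T"
  shows "measure_pmf.prob p {w. \<forall>c. lo < c \<and> c \<le> hi \<longrightarrow> \<not> catalan_slot w c}
    \<le> rate e ^ (hi - lo) * (1 + 1 / e)"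
proof -
  define A where "A = {w. \<forall>c. lo < c \<and> c \<le> hi \<longrightarrow> \<not> catalan_slot w c}"
  have "indicator A xs \<le> Psi e (track lo hi xs)" for xs
  proof (cases "xs \<in> A")
    case True
    have "cand (track lo hi xs) = None"
    proof (rule ccontr)
      assume "cand (track lo hi xs) \<noteq> None"
      then obtain c where "lo < c" "c \<le> hi" "catalan_slot xs c"
        using track_cand_catalan_slot by blast
      then show False
        using True unfolding A_def by blast
    qed
    then show ?thesis
      using True by (simp add: Psi_def barrier_def)
  qed (simp add: Psi_nonneg[OF e_pos e_less_1])
  then have "prefix_expectation p T (indicator A) \<le> prefix_expectation p T (\<lambda>xs. Psi e (track lo hi xs))"
    by (rule prefix_expectation_mono)
  also have "\<dots> \<le> rate e ^ (hi - lo) * (1 + 1 / e)"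
    using expected_Psi_after_window_le[of lo hi "T - hi"] assms by simp
  finally show ?thesis
    unfolding A_def prob_eq_prefix_expectation .
qed

lemma prob_violates_slot_CP_le:
  "measure_pmf.prob p {w. violates_slot_CP k w} \<le> real (T - k) * (rate e ^ k * (1 + 1 / e))"
proof -
  define N where "N b = {w. \<forall>c. b - k < c \<and> c \<le> b \<longrightarrow> \<not> catalan_slot w c}" for b
  have "{w. violates_slot_CP k w} \<inter> set_pmf p \<subseteq> (\<Union>b\<in>{Suc k..T}. N b)"
  proof
    fix w assume w: "w \<in> {w. violates_slot_CP k w} \<inter> set_pmf p"
    then obtain b where "k < b" "b \<le> length w" "\<And>c. b - k < c \<Longrightarrow> c \<le> b \<Longrightarrow> \<not> catalan_slot w c"
      using violates_slot_CP_catalan_free_window by blast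
    moreover have "length w = T"
      using w support_length by auto
    ultimately show "w \<in> (\<Union>b\<in>{Suc k..T}. N b)"
      unfolding N_def by (intro UN_I[of b]) auto
  qed
  then have "measure_pmf.prob p {w. violates_slot_CP k w} \<le> measure_pmf.prob p (\<Union>b\<in>{Suc k..T}. N b)"
    by (metis measure_Int_set_pmf measure_pmf.finite_measure_mono sets_measure_pmf UNIV_I)
  also have "\<dots> \<le> (\<Sum>b\<in>{Suc k..T}. measure_pmf.prob p (N b))"
    by (rule measure_pmf.finite_measure_subadditive_finite) auto
  also have "\<dots> \<le> (\<Sum>b\<in>{Suc k..T}. rate e ^ k * (1 + 1 / e))"
  proof (rule sum_mono)
    fix b assume "b \<in> {Suc k..T}"
    then show "measure_pmf.prob p (N b) \<le> rate e ^ k * (1 + 1 / e)"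
      using prob_catalan_free_window_le[of "b - k" b] unfolding N_def by simp
  qed
  finally show ?thesis
    by simp
qed

end

lemma one_minus_power_le_exp:
  assumes "0 \<le> x" "x \<le> 1"
  shows "(1 - x) ^ k \<le> exp (- (x * real k))"
proof -
  have "(1 - x) ^ k \<le> exp (- x) ^ k"
    using assms exp_ge_add_one_self[of "- x"] by (intro power_mono) simp_all
  then show ?thesis
    by (simp add: exp_of_nat_mult[symmetric] mult.commute)
qed

lemma min_one_plus_inverse_exp_le:
  assumes "0 < e" "e \<le> 1"
  shows "min (1 + 1 / e) (exp (e ^ 3 * real k / 8)) \<le> 1 + real k"
proof (cases "1 \<le> e * real k")
  case True
  then have "1 / e \<le> real k"
    using assms by (simp add: divide_le_eq mult.commute)
  then show ?thesis by simp
next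
  case False
  have "e ^ 3 * real k = e\<^sup>2 * (e * real k)"
    by (simp add: power2_eq_square power3_eq_cube)
  also have "\<dots> \<le> 1"
    by (rule mult_le_one) (use False assms in \<open>simp_all add: power_le_one\<close>)
  finally have "e ^ 3 * real k / 8 \<le> 1 / 2" by linarith
  then have "exp (e ^ 3 * real k / 8) \<le> 1 + 2 * (e ^ 3 * real k / 8)"
    using exp_bound_lemma[of "e ^ 3 * real k / 8"] assms by simp
  also have "\<dots> \<le> 1 + real k"
    using assms power_le_one[of e 3] mult_right_mono[of "e ^ 3" 1 "real k"] by linarith
  finally show ?thesis by simp
qed

lemma union_bound_le_exp:
  fixes e P :: real and k T :: nat
  assumes e: "0 < e" "e < 1" and "P \<le> 1" and P: "P \<le> real (T - k) * ((1 - e ^ 3 / 4) ^ k * (1 + 1 / e))"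
  shows "P \<le> real T * exp (- (e ^ 3 / 8 * real k))"
proof (cases "k < T")
  case False
  then have "P \<le> 0" using P by simp
  also have "0 \<le> real T * exp (- (e ^ 3 / 8 * real k))" by simp
  finally show ?thesis .
next
  case True
  define y where "y = e ^ 3 / 8 * real k"
  have "0 \<le> 1 + 1 / e"
    using e by simp
  have decay: "(1 - e ^ 3 / 4) ^ k \<le> exp (- (2 * y))"
    using one_minus_power_le_exp[of "e ^ 3 / 4" k] e power_le_one[of e 3]
    by (simp add: y_def algebra_simps)
  show ?thesis
  proof (cases "1 + 1 / e \<le> exp y")
    case True
    have "0 \<le> 1 - e ^ 3 / 4"
      using e power_le_one[of e 3] by simp
    then have "real (T - k) * ((1 - e ^ 3 / 4) ^ k * (1 + 1 / e)) \<le>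
        real T * ((1 - e ^ 3 / 4) ^ k * (1 + 1 / e))"
      using \<open>0 \<le> 1 + 1 / e\<close> by (intro mult_right_mono) simp_all
    then have "P \<le> real T * ((1 - e ^ 3 / 4) ^ k * (1 + 1 / e))"
      using P by linarith
    also have "\<dots> \<le> real T * (exp (- (2 * y)) * exp y)"
      using decay True \<open>0 \<le> 1 + 1 / e\<close> by (intro mult_left_mono mult_mono) simp_all
    also have "exp (- (2 * y)) * exp y = exp (- y)"
      by (simp flip: exp_add)
    finally show ?thesis
      by (simp add: y_def)
  next
    case False
    then have "exp y \<le> 1 + real k"
      using min_one_plus_inverse_exp_le[of e k] e by (simp add: y_def min_def split: if_splits)
    also have "\<dots> \<le> real T"
      using True by simp
    finally have "1 \<le> real T * exp (- y)"
      by (simp add: exp_minus field_simps)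
    then show ?thesis
      using \<open>P \<le> 1\<close> by (simp add: y_def)
  qed
qed

theorem theorem2:
  "\<exists>c::real. c > 0 \<and> (\<exists>C::real. C > 0 \<and>
     (\<forall>(\<epsilon>::real) (T::nat) (k::nat) (p::bool list pmf).
        0 < \<epsilon> \<and> \<epsilon> < 1 \<and> set_pmf p \<subseteq> {w. length w = T} \<and> eps_martingale \<epsilon> T p \<longrightarrow>
        measure_pmf.prob p {w. violates_CP k w} \<le> measure_pmf.prob p {w. violates_slot_CP k w} \<and>
        measure_pmf.prob p {w. violates_slot_CP k w}
          \<le> real T * exp (- (c * \<epsilon> ^ 3 * (1 - C * \<epsilon>) * real k))))"
proof (rule exI[of _ "1 / 8"], rule conjI[OF _ exI[of _ 1]], simp, intro conjI allI impI)
  fix \<epsilon> :: real and T k :: nat and p :: "bool list pmf"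
  assume "0 < \<epsilon> \<and> \<epsilon> < 1 \<and> set_pmf p \<subseteq> {w. length w = T} \<and> eps_martingale \<epsilon> T p"
  then interpret eps_martingale_source p T \<epsilon>
    by unfold_locales auto
  show "measure_pmf.prob p {w. violates_CP k w} \<le> measure_pmf.prob p {w. violates_slot_CP k w}"
    by (rule measure_pmf.finite_measure_mono) (auto intro: violates_CP_imp_violates_slot_CP)
  have "measure_pmf.prob p {w. violates_slot_CP k w} \<le> real T * exp (- (\<epsilon> ^ 3 / 8 * real k))"
    using prob_violates_slot_CP_le[of k] e_pos e_less_1
    by (intro union_bound_le_exp) (simp_all add: rate_def)
  also have "\<dots> \<le> real T * exp (- (1 / 8 * \<epsilon> ^ 3 * (1 - 1 * \<epsilon>) * real k))"
    using e_pos e_less_1 by (intro mult_left_mono) (simp_all add: mult_left_le_one_le)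
  finally show "measure_pmf.prob p {w. violates_slot_CP k w}
      \<le> real T * exp (- (1 / 8 * \<epsilon> ^ 3 * (1 - 1 * \<epsilon>) * real k))" .
qed simp

end
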